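(* Let $N=S_1\times\mathbb{R}_{>0}\times S_1$ with coordinates $(\theta,r,y)$ and metric $h=r^2(\mathrm{d}\theta)^2+(\mathrm{d}r)^2+r^{-8}(\mathrm{d}y)^2$. There exist a finite time $T>0$ and a solution $(v,p)$ of the incompressible Euler equation $\partial_t v+\nabla_v v=-\nabla p$, $\operatorname{div}_h v=0$ on $(N,h)$, smooth on $[0,T)\times N$ with smooth initial data, such that $\sup_{(\theta,r,y)\in N}|\partial_r v^r(t,\theta,r,y)|$ is unbounded as $t\uparrow T$, where $v^r$ is the $\partial_r$-component of $v$. In particular, the solution blows up in finite time.
   Context: $\nabla$ is the Levi-Civita connection of $h$, $\nabla p$ the $h$-gradient and $\operatorname{div}_h$ the divergence with respect to the Riemannian volume form of $h$. *)

theory Defs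
  imports "HOL-Analysis.Analysis"
begin

definition pd :: "'a::real_normed_vector \<Rightarrow> ('a \<Rightarrow> real) \<Rightarrow> 'a \<Rightarrow> real" where
  "pd b g x = deriv (\<lambda>s. g (x + s *\<^sub>R b)) 0"

text \<open>C-infinity on an open set U: there is a family of functions containing f, all
  continuous on U, closed under taking partial derivatives along the standard basis
  (i.e. all iterated partial derivatives exist on U and are continuous).\<close>
definition C_inf_on :: "'a::euclidean_space set \<Rightarrow> ('a \<Rightarrow> real) \<Rightarrow> bool" where
  "C_inf_on U f \<longleftrightarrow> (\<exists>F. f \<in> F \<and> (\<forall>g\<in>F. continuous_on U g \<and>
      (\<forall>b\<in>Basis. \<exists>g'\<in>F. \<forall>x\<in>U. ((\<lambda>s. g (x + s *\<^sub>R b)) has_real_derivative g' x) (at 0))))"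

text \<open>Coordinates (t, theta, r, y) on the time-space R x R x R x R; N = S1 x R_{>0} x S1
  is represented by periodic functions (period 2 pi in theta and y), r > 0.\<close>
definition e_t :: "real \<times> real \<times> real \<times> real" where "e_t = (1,0,0,0)"
definition e_th :: "real \<times> real \<times> real \<times> real" where "e_th = (0,1,0,0)"
definition e_r :: "real \<times> real \<times> real \<times> real" where "e_r = (0,0,1,0)"
definition e_y :: "real \<times> real \<times> real \<times> real" where "e_y = (0,0,0,1)"

definition dom_N :: "real \<Rightarrow> (real \<times> real \<times> real \<times> real) set" where
  "dom_N T = {(t,th,r,y). 0 \<le> t \<and> t < T \<and> 0 < r}"

definition periodic_N :: "(real \<times> real \<times> real \<times> real \<Rightarrow> real) \<Rightarrow> bool" where
  "periodic_N f \<longleftrightarrow> (\<forall>t th r y. f (t, th + 2*pi, r, y) = f (t, th, r, y)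
                               \<and> f (t, th, r, y + 2*pi) = f (t, th, r, y))"

text \<open>Incompressible Euler equations on (N,h), h = r^2 dth^2 + dr^2 + r^(-8) dy^2, written
  in coordinates: v = vth d_th + vr d_r + vy d_y.  Christoffel symbols:
  Gamma^r_thth = -r, Gamma^th_thr = 1/r, Gamma^r_yy = 4 r^(-9), Gamma^y_yr = -4/r;
  grad p = r^(-2) p_th d_th + p_r d_r + r^8 p_y d_y;  sqrt(det h) = r^(-3), so
  div_h v = d_th vth + d_r vr + d_y vy - 3 vr / r.\<close>
definition euler_N ::
  "real \<Rightarrow> (real \<times> real \<times> real \<times> real \<Rightarrow> real) \<Rightarrow> (real \<times> real \<times> real \<times> real \<Rightarrow> real)
   \<Rightarrow> (real \<times> real \<times> real \<times> real \<Rightarrow> real) \<Rightarrow> (real \<times> real \<times> real \<times> real \<Rightarrow> real) \<Rightarrow> bool" where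
  "euler_N T vth vr vy p \<longleftrightarrow> (\<forall>x\<in>dom_N T. let r = fst (snd (snd x));
       a = vth x; b = vr x; c = vy x;
       adv = (\<lambda>f. a * pd e_th f x + b * pd e_r f x + c * pd e_y f x) in
     pd e_t vth x + adv vth + 2 * a * b / r = - (pd e_th p x / r^2) \<and>
     pd e_t vr x + adv vr - r * a^2 + 4 * c^2 / r^9 = - pd e_r p x \<and>
     pd e_t vy x + adv vy - 8 * b * c / r = - (r^8 * pd e_y p x) \<and>
     pd e_th vth x + pd e_r vr x + pd e_y vy x - 3 * b / r = 0)"

end

theory Submission
  imports Defs
begin

text \<open>
  The solution is self-similar: \<open>v = X / (1 - t)\<close> and \<open>p = P / (1 - t)\<^sup>2\<close> with the stationary
  field \<open>X = f'(r) cos y \<partial>\<^sub>r - r\<^sup>8 f(r) sin y \<partial>\<^sub>y\<close>, so the Euler system reduces to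
  \<open>X + \<nabla>\<^sub>X X = -\<nabla>P\<close>, \<open>div\<^sub>h X = 0\<close>. Both hold (for suitable \<open>P\<close>) as soon as
  \<open>f'' = 3 f' / r + r\<^sup>8 f\<close>, and this ODE is solved by the integral
  \<open>f(r) = \<integral>\<^sub>0\<^sup>\<infinity> t exp(-t\<^sup>5 - r\<^sup>1\<^sup>0 / (100 t\<^sup>5)) dt\<close>: differentiating under the
  integral sign twice produces integrals that are related by an integration by parts in \<open>t\<close>.
  The factor \<open>exp(-r\<^sup>1\<^sup>0 / (100 t\<^sup>5))\<close> keeps \<open>r\<^sup>8 f\<close> and hence \<open>f''\<close> bounded, so
  \<open>\<partial>\<^sub>r v\<^sup>r = f''(r) cos y / (1 - t)\<close> is bounded at every time \<open>t < 1\<close>; and \<open>f''\<close> cannot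
  vanish identically: then \<open>f' = c\<close> is constant, the ODE forces \<open>f = -3c / r\<^sup>9\<close>, whose
  derivative is \<open>c\<close> only if \<open>c = 0\<close>, contradicting \<open>f > 0\<close>.
\<close>

lemma power_div_fact_le_exp:
  fixes x :: real assumes "0 \<le> x" shows "x ^ n / fact n \<le> exp x"
proof -
  have "(\<lambda>k. x ^ k / fact k) sums exp x"
    using exp_converges[of x] by (simp add: divide_inverse mult.commute)
  then show ?thesis
    using assms sum_le_suminf[of "\<lambda>k. x ^ k / fact k" "{n}"] by (auto simp: sums_iff)
qed

lemma exp_neg_le_fact_div_power:
  fixes w :: real assumes "0 < w" shows "exp (- w) \<le> fact n / w ^ n"
  using power_div_fact_le_exp[of w n] assms by (simp add: exp_minus field_simps)

lemma self_le_one_plus_power: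
  fixes t :: real assumes "0 \<le> t" "0 < n" shows "t \<le> 1 + t ^ n"
proof (cases "t \<le> 1")
  case False
  then have "t ^ 1 \<le> t ^ n" using assms(2) by (intro power_increasing) auto
  then show ?thesis by simp
next
  case True
  moreover have "0 \<le> t ^ n" using assms(1) by simp
  ultimately show ?thesis by linarith
qed

lemma has_real_derivative_integral_dominated:
  fixes h h' :: "real \<Rightarrow> 'a::euclidean_space \<Rightarrow> real"
  assumes x0: "x0 \<in> {a<..<b}"
    and h': "\<And>x t. x \<in> {a<..<b} \<Longrightarrow> t \<in> S \<Longrightarrow> ((\<lambda>x. h x t) has_real_derivative h' x t) (at x)"
    and h_int: "\<And>x. x \<in> {a<..<b} \<Longrightarrow> h x integrable_on S"
    and dominated: "\<And>x t. x \<in> {a<..<b} \<Longrightarrow> t \<in> S \<Longrightarrow> \<bar>h' x t\<bar> \<le> g t"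
    and g_int: "g integrable_on S"
  shows "((\<lambda>x. integral S (h x)) has_real_derivative integral S (h' x0)) (at x0)"
proof -
  define Q where "Q y t = (h y t - h x0 t) / (y - x0)" for y t
  have "((\<lambda>y. integral S (Q y)) \<longlongrightarrow> integral S (h' x0)) (at x0 within {a<..<b})"
  proof (subst tendsto_at_iff_sequentially, intro allI impI)
    fix X assume X: "\<forall>i. X i \<in> {a<..<b} - {x0}" "X \<longlonglongrightarrow> x0"
    have "\<bar>Q (X i) t\<bar> \<le> g t" if t: "t \<in> S" for i t
    proof -
      have "norm (h (X i) t - h x0 t) \<le> g t * norm (X i - x0)"
        by (rule field_differentiable_bound[of "{a<..<b}" "\<lambda>x. h x t" "\<lambda>x. h' x t"])
           (use X x0 t h' dominated in \<open>auto intro: has_field_derivative_at_within\<close>)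
      then show ?thesis
        using X(1) by (simp add: Q_def abs_divide divide_le_eq)
    qed
    moreover have "(\<lambda>i. Q (X i) t) \<longlonglongrightarrow> h' x0 t" if t: "t \<in> S" for t
    proof -
      have "((\<lambda>y. Q y t) \<longlongrightarrow> h' x0 t) (at x0 within {a<..<b})"
        using h'[OF x0 t] unfolding Q_def
        by (auto simp: has_field_derivative_iff intro: tendsto_within_subset)
      then show ?thesis
        using X by (auto simp: tendsto_at_iff_sequentially o_def)
    qed
    ultimately have "(\<lambda>i. integral S (Q (X i))) \<longlonglongrightarrow> integral S (h' x0)"
      using X(1) x0 h_int g_int unfolding Q_def
      by (intro dominated_convergence(2)) (auto intro!: integrable_diff integrable_on_divide)
    then show "((\<lambda>y. integral S (Q y)) \<circ> X) \<longlonglongrightarrow> integral S (h' x0)"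
      by (simp add: o_def)
  qed
  moreover have "integral S (Q y) = (integral S (h y) - integral S (h x0)) / (y - x0)"
    if "y \<in> {a<..<b}" for y
    using that x0 h_int by (simp add: Q_def[abs_def] integral_diff)
  ultimately have "((\<lambda>y. (integral S (h y) - integral S (h x0)) / (y - x0))
      \<longlongrightarrow> integral S (h' x0)) (at x0 within {a<..<b})"
    by (rule Lim_transform_within_open[OF _ open_greaterThanLessThan x0]) auto
  then show ?thesis
    using x0 by (simp add: has_field_derivative_iff at_within_open[of x0 "{a<..<b}"])
qed

lemma fundamental_theorem_of_calculus_Ioi:
  fixes F f :: "real \<Rightarrow> real"
  assumes F: "\<And>x. a < x \<Longrightarrow> (F has_real_derivative f x) (at x)"
    and f: "\<And>x. a < x \<Longrightarrow> isCont f x"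
    and f_int: "f absolutely_integrable_on {a<..}"
    and A: "(F \<longlongrightarrow> A) (at_right a)" and B: "(F \<longlongrightarrow> B) at_top"
  shows "(f has_integral B - A) {a<..}"
proof -
  have meas: "(\<lambda>x. indicator {a<..} x *\<^sub>R f x) \<in> borel_measurable lborel"
    using f borel_measurable_continuous_on_indicator[of "{a<..}" f]
    by (auto intro!: continuous_at_imp_continuous_on)
  have lborel_int: "set_integrable lborel (einterval a \<infinity>) f"
    using f_int meas by (simp add: set_integrable_def integrable_completion)
  have "(LBINT x=ereal a..\<infinity>. f x) = B - A"
    by (rule interval_integral_FTC_integrable[OF _ _ _ lborel_int])
       (use F f A B in \<open>auto simp: ereal_tendsto_simps has_real_derivative_iff_has_vector_derivative[symmetric]\<close>)
  moreover have "(LBINT x=ereal a..\<infinity>. f x) = integral {a<..} f"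
    using interval_integral_eq_integral'[OF _ lborel_int] by simp
  ultimately show ?thesis
    using set_lebesgue_integral_eq_integral(1)[OF f_int] by (simp add: has_integral_iff)
qed

text \<open>Integrable (its two terms are Gamma integrands); it dominates all the integrands below.\<close>

definition majorant :: "real \<Rightarrow> real" where "majorant t = (1 + t^5) * exp (- t)"

lemma majorant_integrable: "majorant integrable_on {0<..}"
proof -
  have "(\<lambda>t::real. t powr (1 - 1) / exp t + t powr (6 - 1) / exp t) integrable_on {0..}"
    by (intro integrable_add has_integral_integrable[OF Gamma_integral_real]) auto
  then have "(\<lambda>t::real. t powr (1 - 1) / exp t + t powr (6 - 1) / exp t) integrable_on {0<..}"
    by (rule integrable_spike_set) (auto intro: negligible_subset[of "{0}"])
  then show ?thesis
    by (rule integrable_eq) (auto simp: majorant_def exp_minus field_simps powr_realpow)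
qed

lemma exp_neg_pow5_le_majorant:
  fixes t :: real assumes "0 \<le> t" shows "(1 + t^5) * exp (-(t^5)) \<le> exp 1 * majorant t"
proof -
  have "exp (-(t^5)) \<le> exp 1 * exp (- t)"
    using self_le_one_plus_power[OF assms, of 5] by (simp flip: exp_add)
  then have "(1 + t^5) * exp (-(t^5)) \<le> (1 + t^5) * (exp 1 * exp (- t))"
    using assms by (intro mult_left_mono) auto
  then show ?thesis by (simp add: majorant_def mult_ac)
qed

text \<open>
  With \<open>q = r\<^sup>1\<^sup>0 / 100\<close>, the \<open>r\<close>-derivative of \<open>radial_kernel k q t\<close> is
  \<open>-(r\<^sup>9 / 10) * radial_kernel (k + 1) q t\<close>, so \<open>k\<close> counts differentiations of the profile.
\<close>

definition radial_kernel :: "nat \<Rightarrow> real \<Rightarrow> real \<Rightarrow> real" where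
  "radial_kernel k q t = t * exp (-(t^5)) * exp (- (q / t^5)) / t^(5*k)"

lemma radial_kernel_pos: "0 < t \<Longrightarrow> 0 < radial_kernel k q t"
  by (simp add: radial_kernel_def)

lemma continuous_on_radial_kernel: "continuous_on {0<..} (radial_kernel k q)"
  unfolding radial_kernel_def by (intro continuous_intros) auto

lemma radial_kernel_le_majorant:
  assumes t: "0 < t" and q: "0 < q1" "q1 \<le> q"
  shows "radial_kernel k q t \<le> fact k / q1^k * exp 1 * majorant t"
proof -
  have "exp (- (q / t^5)) \<le> exp (- (q1 / t^5))"
    using t q by (simp add: divide_right_mono)
  also have "\<dots> \<le> fact k / (q1 / t^5)^k"
    using t q by (intro exp_neg_le_fact_div_power) auto
  finally have "t * exp (-(t^5)) * exp (- (q / t^5)) / t^(5*k)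
      \<le> t * exp (-(t^5)) * (fact k / (q1 / t^5)^k) / t^(5*k)"
    using t by (intro divide_right_mono mult_left_mono) auto
  then have "radial_kernel k q t \<le> t * exp (-(t^5)) * (fact k / (q1 / t^5)^k) / t^(5*k)"
    by (simp add: radial_kernel_def)
  also have "\<dots> = fact k / q1^k * (t * exp (-(t^5)))"
    using t q by (simp add: power_divide power_mult)
  also have "\<dots> \<le> fact k / q1^k * ((1 + t^5) * exp (-(t^5)))"
    using self_le_one_plus_power[of t 5] t q by (intro mult_left_mono mult_right_mono) auto
  also have "\<dots> \<le> fact k / q1^k * (exp 1 * majorant t)"
    using exp_neg_pow5_le_majorant[of t] t q by (intro mult_left_mono) auto
  finally show ?thesis by simp
qed

lemma radial_kernel_absolutely_integrable:
  assumes "0 < q" shows "radial_kernel k q absolutely_integrable_on {0<..}"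
proof (rule measurable_bounded_by_integrable_imp_absolutely_integrable)
  show "radial_kernel k q \<in> borel_measurable (lebesgue_on {0<..})"
    by (rule continuous_imp_measurable_on_sets_lebesgue[OF continuous_on_radial_kernel]) auto
  show "(\<lambda>t. fact k / q^k * exp 1 * majorant t) integrable_on {0<..}"
    by (rule integrable_on_mult_right[OF majorant_integrable])
  show "norm (radial_kernel k q t) \<le> fact k / q^k * exp 1 * majorant t" if "t \<in> {0<..}" for t
    using radial_kernel_le_majorant[of t q q k] radial_kernel_pos[of t k q] that assms by simp
qed auto

lemma radial_kernel_integrable: "0 < q \<Longrightarrow> radial_kernel k q integrable_on {0<..}"
  using radial_kernel_absolutely_integrable absolutely_integrable_on_def by blast

lemma has_real_derivative_radial_kernel:
  assumes "0 < t"
  shows "((\<lambda>r. radial_kernel k (r^10/100) t) has_real_derivative - (r^9/10) * radial_kernel (Suc k) (r^10/100) t) (at r)"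
  unfolding radial_kernel_def using assms
  by (auto intro!: derivative_eq_intros) (simp add: field_simps power_add)

definition radial_integral :: "nat \<Rightarrow> real \<Rightarrow> real" where
  "radial_integral k r = integral {0<..} (radial_kernel k (r^10/100))"

lemma has_real_derivative_radial_integral:
  assumes r: "0 < r"
  shows "(radial_integral k has_real_derivative - (r^9/10) * radial_integral (Suc k) r) (at r)"
proof -
  define q1 where "q1 = (r/2)^10/100"
  define C where "C = (2*r)^9/10 * (fact (Suc k) / q1^Suc k * exp 1)"
  have "((\<lambda>x. integral {0<..} (radial_kernel k (x^10/100))) has_real_derivative
      integral {0<..} (\<lambda>t. - (r^9/10) * radial_kernel (Suc k) (r^10/100) t)) (at r)"
  proof (rule has_real_derivative_integral_dominated[where a="r/2" and b="2*r" and g="\<lambda>t. C * majorant t"])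
    show "((\<lambda>x. radial_kernel k (x^10/100) t) has_real_derivative - (x^9/10) * radial_kernel (Suc k) (x^10/100) t) (at x)"
      if "t \<in> {0<..}" for x t
      using that by (intro has_real_derivative_radial_kernel) auto
    show "radial_kernel k (x^10/100) integrable_on {0<..}" if "x \<in> {r/2<..<2*r}" for x
      using that r by (intro radial_kernel_integrable) auto
    show "\<bar>- (x^9/10) * radial_kernel (Suc k) (x^10/100) t\<bar> \<le> C * majorant t"
      if x: "x \<in> {r/2<..<2*r}" and t: "t \<in> {0<..}" for x t
    proof -
      have "x^9 \<le> (2*r)^9" "(r/2)^10 \<le> x^10"
        by (intro power_mono; use x r in simp)+
      then have "x^9 \<le> (2*r)^9" "q1 \<le> x^10/100"
        by (auto simp: q1_def)
      moreover have "radial_kernel (Suc k) (x^10/100) t \<le> fact (Suc k) / q1^Suc k * exp 1 * majorant t"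
        using t r \<open>q1 \<le> x^10/100\<close> by (intro radial_kernel_le_majorant) (auto simp: q1_def)
      ultimately have "x^9/10 * radial_kernel (Suc k) (x^10/100) t \<le> C * majorant t"
        unfolding C_def mult.assoc using r t radial_kernel_pos[of t "Suc k" "x^10/100"]
        by (intro mult_mono) auto
      then show ?thesis
        using x r t radial_kernel_pos[of t "Suc k" "x^10/100"] by (simp add: abs_mult)
    qed
    show "(\<lambda>t. C * majorant t) integrable_on {0<..}"
      by (rule integrable_on_mult_right[OF majorant_integrable])
  qed (use r in auto)
  then show ?thesis
    by (simp add: radial_integral_def[abs_def])
qed

text \<open>
  The \<open>t\<close>-derivative of this function links the three kernels; it vanishes at both ends of
  \<open>(0, \<infinity>)\<close>, which is the integration by parts behind \<open>radial_integral_identity\<close>.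
\<close>

definition radial_potential :: "real \<Rightarrow> real \<Rightarrow> real" where
  "radial_potential q t = exp (-(t^5)) * exp (- (q / t^5)) / t^3"

lemma has_real_derivative_radial_potential:
  assumes "0 < t"
  shows "(radial_potential q has_real_derivative
           5 * q * radial_kernel 2 q t - 5 * radial_kernel 0 q t - 3 * radial_kernel 1 q t) (at t)"
  unfolding radial_potential_def radial_kernel_def using assms
  by (auto intro!: derivative_eq_intros) (simp add: field_simps, algebra)

lemma radial_potential_tendsto_at_right_0:
  assumes "0 < q" shows "(radial_potential q \<longlongrightarrow> 0) (at_right 0)"
proof (rule tendsto_sandwich)
  show "\<forall>\<^sub>F t in at_right 0. 0 \<le> radial_potential q t"
    by (auto simp: eventually_at_right_less radial_potential_def eventually_at_filter)
  have "radial_potential q t \<le> 2 * t^7 / q^2" if "0 < t" for t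
  proof -
    have "radial_potential q t \<le> 1 * (fact 2 / (q / t^5)^2) / t^3"
      unfolding radial_potential_def using that assms
      by (intro divide_right_mono mult_mono exp_neg_le_fact_div_power) auto
    also have "\<dots> = 2 * t^7 / q^2"
      using that assms by (simp add: power_divide field_simps eval_nat_numeral)
    finally show ?thesis .
  qed
  then show "\<forall>\<^sub>F t in at_right 0. radial_potential q t \<le> 2 * t^7 / q^2"
    by (auto simp: eventually_at_right_less eventually_at_filter)
  show "((\<lambda>t. 2 * t^7 / q^2) \<longlongrightarrow> 0) (at_right 0)"
    using assms by (auto intro!: tendsto_eq_intros)
qed auto

lemma radial_potential_tendsto_at_top:
  assumes "0 \<le> q" shows "(radial_potential q \<longlongrightarrow> 0) at_top"
proof (rule tendsto_sandwich)
  show "\<forall>\<^sub>F t in at_top. 0 \<le> radial_potential q t"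
    using eventually_gt_at_top[of 0] by eventually_elim (simp add: radial_potential_def)
  show "\<forall>\<^sub>F t in at_top. radial_potential q t \<le> inverse (t^3)"
    using eventually_gt_at_top[of 0]
    by eventually_elim (use assms in \<open>auto simp: radial_potential_def inverse_eq_divide intro!: divide_right_mono mult_le_one\<close>)
  show "((\<lambda>t::real. inverse (t^3)) \<longlongrightarrow> 0) at_top"
    by (intro tendsto_inverse_0_at_top filterlim_pow_at_top filterlim_ident) auto
qed auto

lemma radial_integral_identity:
  assumes r: "0 < r"
  shows "radial_integral 0 r = r^10/100 * radial_integral 2 r - 3/5 * radial_integral 1 r"
proof -
  define q where "q = r^10/100"
  have q: "0 < q" using r by (simp add: q_def)
  define f where "f t = 5 * q * radial_kernel 2 q t - 5 * radial_kernel 0 q t - 3 * radial_kernel 1 q t" for t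
  have "(f has_integral 0 - 0) {0<..}"
  proof (rule fundamental_theorem_of_calculus_Ioi)
    show "(radial_potential q has_real_derivative f t) (at t)" if "0 < t" for t
      using has_real_derivative_radial_potential[OF that] by (simp add: f_def)
    show "isCont f t" if "0 < t" for t
      using that unfolding f_def[abs_def] radial_kernel_def by (intro continuous_intros) auto
    show "f absolutely_integrable_on {0<..}"
      unfolding f_def using radial_kernel_absolutely_integrable[OF q]
      by (intro set_integral_diff(1) set_integrable_mult_right) auto
  qed (use radial_potential_tendsto_at_right_0[OF q] radial_potential_tendsto_at_top q in auto)
  moreover have "(f has_integral 5 * q * integral {0<..} (radial_kernel 2 q)
      - 5 * integral {0<..} (radial_kernel 0 q) - 3 * integral {0<..} (radial_kernel 1 q)) {0<..}"
    unfolding f_def using radial_kernel_integrable[OF q]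
    by (intro has_integral_diff has_integral_mult_right integrable_integral)
  ultimately show ?thesis
    by (auto simp: radial_integral_def q_def[symmetric] dest: has_integral_unique)
qed

lemma radial_integral_pos:
  assumes r: "0 < r" shows "0 < radial_integral k r"
proof -
  have q: "0 < r^10/100" using r by simp
  have cont: "continuous_on {1..2} (radial_kernel k (r^10/100))"
    using continuous_on_radial_kernel by (rule continuous_on_subset) auto
  obtain t0 where t0: "t0 \<in> {1..2}" and min: "\<And>t. t \<in> {1..2} \<Longrightarrow> radial_kernel k (r^10/100) t0 \<le> radial_kernel k (r^10/100) t"
    using continuous_attains_inf[OF compact_Icc _ cont] by auto
  have "0 < radial_kernel k (r^10/100) t0"
    using t0 by (intro radial_kernel_pos) auto
  also have "radial_kernel k (r^10/100) t0 = integral {1..2::real} (\<lambda>_. radial_kernel k (r^10/100) t0)"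
    by simp
  also have "\<dots> \<le> integral {1..2} (radial_kernel k (r^10/100))"
    using min by (intro integral_le integrable_continuous_interval cont) auto
  also have "\<dots> \<le> integral {0<..} (radial_kernel k (r^10/100))"
    using radial_kernel_integrable[OF q] radial_kernel_pos
    by (intro integral_subset_le integrable_continuous_interval cont) (auto simp: less_imp_le)
  finally show ?thesis
    by (simp add: radial_integral_def)
qed

lemma pow8_mult_exp_le:
  fixes r t :: real assumes r: "0 < r" and t: "0 < t"
  shows "r^8 * exp (- (r^10/100 / t^5)) \<le> 100 * t^4"
proof (cases "r^2 \<le> t")
  case True
  have "r^8 = (r^2)^4" by simp
  also have "\<dots> \<le> t^4" using True by (intro power_mono) auto
  finally have "r^8 * exp (- (r^10/100 / t^5)) \<le> t^4 * 1"
    using t by (intro mult_mono) auto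
  moreover have "0 \<le> t^4" using t by simp
  ultimately show ?thesis by linarith
next
  case False
  have "r^8 * exp (- (r^10/100 / t^5)) \<le> r^8 * (fact 1 / (r^10/100 / t^5)^1)"
    using r t by (intro mult_left_mono exp_neg_le_fact_div_power) auto
  also have "\<dots> = 100 * t^4 * (t / r^2)"
    using r t by (simp add: field_simps eval_nat_numeral)
  also have "\<dots> \<le> 100 * t^4 * 1"
    using False t r by (intro mult_left_mono) auto
  finally show ?thesis by simp
qed

lemma pow8_mult_radial_kernel_le:
  assumes r: "0 < r" and t: "0 < t" and k: "k \<le> 1"
  shows "r^8 * radial_kernel k (r^10/100) t \<le> 100 * exp 1 * majorant t"
proof -
  have "r^8 * radial_kernel k (r^10/100) t = t * exp (-(t^5)) * (r^8 * exp (- (r^10/100 / t^5))) / t^(5*k)"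
    by (simp add: radial_kernel_def)
  also have "\<dots> \<le> t * exp (-(t^5)) * (100 * t^4) / t^(5*k)"
    using pow8_mult_exp_le[OF r t] t by (intro divide_right_mono mult_left_mono) auto
  also have "\<dots> \<le> 100 * ((1 + t^5) * exp (-(t^5)))"
    using k t by (cases k) (auto simp: eval_nat_numeral field_simps)
  also have "\<dots> \<le> 100 * exp 1 * majorant t"
    using exp_neg_pow5_le_majorant[of t] t by simp
  finally show ?thesis .
qed

lemma pow8_mult_radial_integral_bounded:
  assumes "k \<le> 1" shows "\<exists>B. \<forall>r>0. \<bar>r^8 * radial_integral k r\<bar> \<le> B"
proof (intro exI allI impI)
  fix r :: real assume r: "0 < r"
  have "r^8 * radial_integral k r = integral {0<..} (\<lambda>t. r^8 * radial_kernel k (r^10/100) t)"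
    by (simp add: radial_integral_def)
  also have "norm \<dots> \<le> integral {0<..} (\<lambda>t. 100 * exp 1 * majorant t)"
  proof (intro integral_norm_bound_integral integrable_on_mult_right majorant_integrable radial_kernel_integrable)
    show "norm (r^8 * radial_kernel k (r^10/100) t) \<le> 100 * exp 1 * majorant t" if "t \<in> {0<..}" for t
      using pow8_mult_radial_kernel_le[OF r _ assms, of t] radial_kernel_pos[of t k "r^10/100"] r that
      by (simp add: abs_of_pos)
  qed (use r in simp)
  finally show "\<bar>r^8 * radial_integral k r\<bar> \<le> integral {0<..} (\<lambda>t. 100 * exp 1 * majorant t)"
    by simp
qed

definition profile :: "real \<Rightarrow> real" where "profile = radial_integral 0"
definition profile' :: "real \<Rightarrow> real" where "profile' r = - (r^9/10) * radial_integral 1 r"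

text \<open>
  Defined through the ODE; \<open>has_real_derivative_profile'\<close> shows that it is the derivative
  of \<open>profile'\<close>.
\<close>

definition profile'' :: "real \<Rightarrow> real" where "profile'' r = 3 * profile' r / r + r^8 * profile r"

lemma profile''_eq: "0 < r \<Longrightarrow> profile'' r = r^8 * radial_integral 0 r - 3/10 * (r^8 * radial_integral 1 r)"
proof -
  assume "0 < r"
  moreover have "r^9 = r * r^8" by (simp flip: power_Suc)
  ultimately show ?thesis by (simp add: profile''_def profile'_def profile_def field_simps)
qed

lemma has_real_derivative_profile: "0 < r \<Longrightarrow> (profile has_real_derivative profile' r) (at r)"
  using has_real_derivative_radial_integral[of r 0] by (simp add: profile_def profile'_def)

lemma has_real_derivative_profile': assumes r: "0 < r" shows "(profile' has_real_derivative profile'' r) (at r)"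
proof -
  have "((\<lambda>x. - (x^9/10)) has_real_derivative - (9 * r^8 / 10)) (at r)"
    by (auto intro!: derivative_eq_intros)
  from DERIV_mult[OF this has_real_derivative_radial_integral[OF r, of 1]]
  have deriv: "(profile' has_real_derivative - (9 * r^8 / 10) * radial_integral 1 r
      + r^9 * r^9 / 100 * radial_integral 2 r) (at r)"
    by (simp add: profile'_def[abs_def] numeral_2_eq_2 mult_ac)
  have "r^9 * r^9 / 100 * radial_integral 2 r = r^8 * (r^10/100 * radial_integral 2 r)"
    by algebra
  also have "\<dots> = r^8 * (radial_integral 0 r + 3/5 * radial_integral 1 r)"
    using radial_integral_identity[OF r] by simp
  finally show ?thesis
    using profile''_eq[OF r] by (intro DERIV_cong[OF deriv]) (simp add: algebra_simps)
qed

lemma profile''_bounded: "\<exists>B. \<forall>r>0. \<bar>profile'' r\<bar> \<le> B"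
proof -
  obtain B0 B1 where B0: "\<And>r. 0 < r \<Longrightarrow> \<bar>r^8 * radial_integral 0 r\<bar> \<le> B0"
    and B1: "\<And>r. 0 < r \<Longrightarrow> \<bar>r^8 * radial_integral 1 r\<bar> \<le> B1"
    using pow8_mult_radial_integral_bounded[of 0] pow8_mult_radial_integral_bounded[of 1] by auto
  have "\<bar>profile'' r\<bar> \<le> B0 + 3/10 * B1" if "0 < r" for r
    unfolding profile''_eq[OF that] using B0[OF that] B1[OF that] by (simp add: abs_le_iff)
  then show ?thesis by blast
qed

lemma profile''_not_identically_zero: "\<exists>r>0. profile'' r \<noteq> 0"
proof (rule ccontr)
  assume "\<not> (\<exists>r>0. profile'' r \<noteq> 0)"
  then have zero: "\<And>r. 0 < r \<Longrightarrow> profile'' r = 0" by auto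
  have "\<exists>c. \<forall>r\<in>{0<..}. profile' r = c"
  proof (rule has_field_derivative_zero_constant)
    show "(profile' has_real_derivative 0) (at r within {0<..})" if "r \<in> {0<..}" for r
      using has_real_derivative_profile'[of r] zero[of r] that by (simp add: has_field_derivative_at_within)
  qed (rule convex_real_interval)
  then obtain c where c: "\<And>r. 0 < r \<Longrightarrow> profile' r = c" by auto
  have profile_eq: "profile r = -3 * c / r^9" if "0 < r" for r
  proof -
    have "r^9 = r * r^8" by (simp flip: power_Suc)
    then show ?thesis
      using zero[OF that] c[OF that] that by (simp add: profile''_def field_simps)
  qed
  have "(profile has_real_derivative c) (at 1)"
    using has_real_derivative_profile[of 1] c[of 1] by simp
  then have "((\<lambda>r. -3 * c / r^9) has_real_derivative c) (at 1)"
    by (rule has_field_derivative_transform_within_open[where S="{0<..}"]) (simp_all add: profile_eq)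
  moreover have "((\<lambda>r. -3 * c / r^9) has_real_derivative 27 * c) (at 1)"
    by (auto intro!: derivative_eq_intros)
  ultimately have "c = 27 * c"
    by (rule DERIV_unique)
  then have "c = 0" by simp
  then show False
    using profile_eq[of 1] radial_integral_pos[of 1 0] by (simp add: profile_def)
qed

inductive_set function_algebra :: "('a \<Rightarrow> real) set \<Rightarrow> ('a \<Rightarrow> real) set"
  for G :: "('a \<Rightarrow> real) set" where
  const: "(\<lambda>x. c) \<in> function_algebra G"
| generator: "g \<in> G \<Longrightarrow> g \<in> function_algebra G"
| add: "f \<in> function_algebra G \<Longrightarrow> g \<in> function_algebra G \<Longrightarrow> (\<lambda>x. f x + g x) \<in> function_algebra G"
| mult: "f \<in> function_algebra G \<Longrightarrow> g \<in> function_algebra G \<Longrightarrow> (\<lambda>x. f x * g x) \<in> function_algebra G"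

lemma function_algebra_uminus: "f \<in> function_algebra G \<Longrightarrow> (\<lambda>x. - f x) \<in> function_algebra G"
  using function_algebra.mult[OF function_algebra.const[of "-1"]] by simp

lemma function_algebra_power:
  assumes "f \<in> function_algebra G" shows "(\<lambda>x. f x ^ n) \<in> function_algebra G"
proof (induction n)
  case 0
  show ?case using function_algebra.const[of 1] by simp
next
  case (Suc n)
  show ?case using function_algebra.mult[OF assms Suc.IH] by simp
qed

definition has_partials_in :: "'a::euclidean_space set \<Rightarrow> ('a \<Rightarrow> real) set \<Rightarrow> ('a \<Rightarrow> real) \<Rightarrow> bool" where
  "has_partials_in U F g \<longleftrightarrow> continuous_on U g \<and>
     (\<forall>b\<in>Basis. \<exists>g'\<in>F. \<forall>x\<in>U. ((\<lambda>s. g (x + s *\<^sub>R b)) has_real_derivative g' x) (at 0))"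

lemma C_inf_on_iff_has_partials_in: "C_inf_on U f \<longleftrightarrow> (\<exists>F. f \<in> F \<and> (\<forall>g\<in>F. has_partials_in U F g))"
  by (simp add: C_inf_on_def has_partials_in_def)

lemma has_partials_in_function_algebra:
  assumes gens: "\<And>g. g \<in> G \<Longrightarrow> has_partials_in U (function_algebra G) g"
    and f: "f \<in> function_algebra G"
  shows "has_partials_in U (function_algebra G) f"
  using f
proof induction
  case (const c)
  then show ?case
    by (auto simp: has_partials_in_def intro!: bexI[of _ "\<lambda>x. 0"] function_algebra.const)
next
  case (generator g)
  then show ?case by (rule gens)
next
  case (add f g)
  show ?case
    unfolding has_partials_in_def
  proof (intro conjI ballI)
    show "continuous_on U (\<lambda>x. f x + g x)"
      using add.IH by (intro continuous_intros) (auto simp: has_partials_in_def)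
    fix b :: 'a assume b: "b \<in> Basis"
    obtain f' g' where "f' \<in> function_algebra G" "g' \<in> function_algebra G"
      and "\<forall>x\<in>U. ((\<lambda>s. f (x + s *\<^sub>R b)) has_real_derivative f' x) (at 0)"
      and "\<forall>x\<in>U. ((\<lambda>s. g (x + s *\<^sub>R b)) has_real_derivative g' x) (at 0)"
      using add.IH b unfolding has_partials_in_def by blast
    then show "\<exists>h'\<in>function_algebra G. \<forall>x\<in>U.
        ((\<lambda>s. f (x + s *\<^sub>R b) + g (x + s *\<^sub>R b)) has_real_derivative h' x) (at 0)"
      by (intro bexI[of _ "\<lambda>x. f' x + g' x"] ballI DERIV_add function_algebra.add) auto
  qed
next
  case (mult f g)
  show ?case
    unfolding has_partials_in_def
  proof (intro conjI ballI)
    show "continuous_on U (\<lambda>x. f x * g x)"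
      using mult.IH by (intro continuous_intros) (auto simp: has_partials_in_def)
    fix b :: 'a assume b: "b \<in> Basis"
    obtain f' g' where f': "f' \<in> function_algebra G"
        "\<And>x. x \<in> U \<Longrightarrow> ((\<lambda>s. f (x + s *\<^sub>R b)) has_real_derivative f' x) (at 0)"
      and g': "g' \<in> function_algebra G"
        "\<And>x. x \<in> U \<Longrightarrow> ((\<lambda>s. g (x + s *\<^sub>R b)) has_real_derivative g' x) (at 0)"
      using mult.IH b unfolding has_partials_in_def by metis
    show "\<exists>h'\<in>function_algebra G. \<forall>x\<in>U.
        ((\<lambda>s. f (x + s *\<^sub>R b) * g (x + s *\<^sub>R b)) has_real_derivative h' x) (at 0)"
    proof (intro bexI[of _ "\<lambda>x. f' x * g x + g' x * f x"] ballI)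
      fix x assume "x \<in> U"
      from DERIV_mult[OF f'(2)[OF this] g'(2)[OF this]]
      show "((\<lambda>s. f (x + s *\<^sub>R b) * g (x + s *\<^sub>R b)) has_real_derivative f' x * g x + g' x * f x) (at 0)"
        by simp
    qed (intro function_algebra.add function_algebra.mult mult.hyps f'(1) g'(1))
  qed
qed

lemma C_inf_on_function_algebra:
  assumes "\<And>g. g \<in> G \<Longrightarrow> has_partials_in U (function_algebra G) g" "f \<in> function_algebra G"
  shows "C_inf_on U f"
  unfolding C_inf_on_iff_has_partials_in
  using assms(2) has_partials_in_function_algebra[OF assms(1)] by blast

lemma has_real_derivative_comp_linear_line:
  fixes l :: "'a::euclidean_space \<Rightarrow> real"
  assumes l: "bounded_linear l"
    and \<phi>: "(\<phi> has_real_derivative D) (at (l x))"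
  shows "((\<lambda>s. \<phi> (l (x + s *\<^sub>R b))) has_real_derivative D * l b) (at 0)"
proof -
  have "(\<phi> has_real_derivative D) (at (l x + 0 * l b))"
    using \<phi> by simp
  moreover have "((\<lambda>s. l x + s * l b) has_real_derivative l b) (at 0)"
    by (auto intro!: derivative_eq_intros)
  ultimately have "((\<lambda>s. \<phi> (l x + s * l b)) has_real_derivative D * l b) (at 0)"
    by (rule DERIV_chain2)
  moreover have "l (x + s *\<^sub>R b) = l x + s * l b" for s
    using l by (simp add: linear_add linear_scale bounded_linear.linear)
  ultimately show ?thesis
    by simp
qed

lemma has_partials_in_comp_linear:
  fixes l :: "'a::euclidean_space \<Rightarrow> real"
  assumes l: "bounded_linear l"
    and \<phi>: "\<And>x. x \<in> U \<Longrightarrow> (\<phi> has_real_derivative \<phi>' (l x)) (at (l x))"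
    and \<phi>': "(\<lambda>x. \<phi>' (l x)) \<in> function_algebra G"
  shows "has_partials_in U (function_algebra G) (\<lambda>x. \<phi> (l x))"
  unfolding has_partials_in_def
proof (intro conjI ballI)
  have "isCont (\<lambda>x. \<phi> (l x)) x" if "x \<in> U" for x
    using isCont_o2[OF linear_continuous_at[OF l] DERIV_isCont[OF \<phi>[OF that]]] .
  then show "continuous_on U (\<lambda>x. \<phi> (l x))"
    by (simp add: continuous_at_imp_continuous_on)
  fix b :: 'a
  have "(\<lambda>x. \<phi>' (l x) * l b) \<in> function_algebra G"
    using function_algebra.mult[OF \<phi>' function_algebra.const] .
  moreover have "\<forall>x\<in>U. ((\<lambda>s. \<phi> (l (x + s *\<^sub>R b))) has_real_derivative \<phi>' (l x) * l b) (at 0)"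
    using has_real_derivative_comp_linear_line[OF l \<phi>] by blast
  ultimately show "\<exists>g'\<in>function_algebra G. \<forall>x\<in>U. ((\<lambda>s. \<phi> (l (x + s *\<^sub>R b))) has_real_derivative g' x) (at 0)"
    by (intro bexI[of _ "\<lambda>x. \<phi>' (l x) * l b"]) simp_all
qed

definition euler_domain :: "(real \<times> real \<times> real \<times> real) set" where
  "euler_domain = {x. fst x < 1 \<and> 0 < fst (snd (snd x))}"

text \<open>
  Each generator is a function of one coordinate whose derivative is a polynomial in the
  generators (for \<open>profile'\<close> this is the ODE), so the generated algebra is closed under
  partial derivatives.
\<close>

definition euler_generators :: "(real \<times> real \<times> real \<times> real \<Rightarrow> real) set" where
  "euler_generators =
     {\<lambda>x. inverse (1 - fst x), \<lambda>x. fst (snd (snd x)), \<lambda>x. inverse (fst (snd (snd x))),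
      \<lambda>x. cos (snd (snd (snd x))), \<lambda>x. sin (snd (snd (snd x))),
      \<lambda>x. profile (fst (snd (snd x))), \<lambda>x. profile' (fst (snd (snd x)))}"

lemma euler_generators_in_function_algebra:
  "(\<lambda>x. inverse (1 - fst x)) \<in> function_algebra euler_generators"
  "(\<lambda>x. fst (snd (snd x))) \<in> function_algebra euler_generators"
  "(\<lambda>x. inverse (fst (snd (snd x)))) \<in> function_algebra euler_generators"
  "(\<lambda>x. cos (snd (snd (snd x)))) \<in> function_algebra euler_generators"
  "(\<lambda>x. sin (snd (snd (snd x)))) \<in> function_algebra euler_generators"
  "(\<lambda>x. profile (fst (snd (snd x)))) \<in> function_algebra euler_generators"
  "(\<lambda>x. profile' (fst (snd (snd x)))) \<in> function_algebra euler_generators"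
  by (simp_all add: function_algebra.generator euler_generators_def)

lemma bounded_linear_coordinates:
  "bounded_linear (\<lambda>x::real \<times> real \<times> real \<times> real. fst x)"
  "bounded_linear (\<lambda>x::real \<times> real \<times> real \<times> real. fst (snd (snd x)))"
  "bounded_linear (\<lambda>x::real \<times> real \<times> real \<times> real. snd (snd (snd x)))"
  by (intro bounded_linear_intros)+

lemma euler_generators_have_partials:
  assumes "g \<in> euler_generators"
  shows "has_partials_in euler_domain (function_algebra euler_generators) g"
proof -
  note gens = euler_generators_in_function_algebra
  note t = bounded_linear_coordinates(1) and r = bounded_linear_coordinates(2)
    and y = bounded_linear_coordinates(3)
  let ?P = "has_partials_in euler_domain (function_algebra euler_generators)"
  have "?P (\<lambda>x. inverse (1 - fst x))"
    by (rule has_partials_in_comp_linear[OF t, where \<phi>' = "\<lambda>u. inverse (1 - u) * inverse (1 - u)"])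
       (auto simp: euler_domain_def power2_eq_square intro!: derivative_eq_intros
             function_algebra.mult gens)
  moreover have "?P (\<lambda>x. fst (snd (snd x)))"
    using has_partials_in_comp_linear[OF r, where \<phi> = "\<lambda>u. u" and \<phi>' = "\<lambda>u. 1"]
    by (simp add: function_algebra.const)
  moreover have "?P (\<lambda>x. inverse (fst (snd (snd x))))"
    by (rule has_partials_in_comp_linear[OF r, where \<phi>' = "\<lambda>u. - (inverse u * inverse u)"])
       (auto simp: euler_domain_def power2_eq_square intro!: derivative_eq_intros
             function_algebra_uminus function_algebra.mult gens)
  moreover have "?P (\<lambda>x. cos (snd (snd (snd x))))"
    by (rule has_partials_in_comp_linear[OF y, where \<phi>' = "\<lambda>u. - sin u"])
       (auto intro!: derivative_eq_intros function_algebra_uminus gens)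
  moreover have "?P (\<lambda>x. sin (snd (snd (snd x))))"
    by (rule has_partials_in_comp_linear[OF y, where \<phi>' = cos])
       (auto intro!: derivative_eq_intros gens)
  moreover have "?P (\<lambda>x. profile (fst (snd (snd x))))"
    by (rule has_partials_in_comp_linear[OF r, where \<phi>' = profile'])
       (auto simp: euler_domain_def intro: has_real_derivative_profile gens)
  moreover have "?P (\<lambda>x. profile' (fst (snd (snd x))))"
  proof (rule has_partials_in_comp_linear[OF r, where \<phi>' = "\<lambda>u. 3 * profile' u * inverse u + u ^ 8 * profile u"])
    show "(profile' has_real_derivative 3 * profile' (fst (snd (snd x))) * inverse (fst (snd (snd x)))
        + fst (snd (snd x)) ^ 8 * profile (fst (snd (snd x)))) (at (fst (snd (snd x))))"
      if "x \<in> euler_domain" for x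
      using has_real_derivative_profile'[of "fst (snd (snd x))"] that
      by (simp add: euler_domain_def profile''_def divide_inverse)
    show "(\<lambda>x. 3 * profile' (fst (snd (snd x))) * inverse (fst (snd (snd x)))
        + fst (snd (snd x)) ^ 8 * profile (fst (snd (snd x)))) \<in> function_algebra euler_generators"
      by (intro function_algebra.add function_algebra.mult function_algebra.const
          function_algebra_power gens)
  qed
  ultimately show ?thesis
    using assms by (auto simp: euler_generators_def)
qed

definition vel_r :: "real \<times> real \<times> real \<times> real \<Rightarrow> real" where
  "vel_r = (\<lambda>(t, \<theta>, r, y). profile' r * cos y / (1 - t))"

definition vel_y :: "real \<times> real \<times> real \<times> real \<Rightarrow> real" where
  "vel_y = (\<lambda>(t, \<theta>, r, y). - (r^8 * profile r * sin y / (1 - t)))"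

definition pressure :: "real \<times> real \<times> real \<times> real \<Rightarrow> real" where
  "pressure = (\<lambda>(t, \<theta>, r, y).
     - (profile r * cos y + (profile' r ^ 2 * cos y ^ 2 + r^8 * profile r ^ 2 * sin y ^ 2) / 2) / (1 - t)^2)"

lemma euler_fields_C_inf_on:
  "C_inf_on euler_domain (\<lambda>_. 0)" "C_inf_on euler_domain vel_r"
  "C_inf_on euler_domain vel_y" "C_inf_on euler_domain pressure"
proof -
  note gens = euler_generators_in_function_algebra
  have "(\<lambda>_. 0) \<in> function_algebra euler_generators"
    "vel_r \<in> function_algebra euler_generators"
    "vel_y \<in> function_algebra euler_generators"
    "pressure \<in> function_algebra euler_generators"
    unfolding vel_r_def vel_y_def pressure_def split_beta divide_inverse power_inverse[symmetric]
    by (intro function_algebra.add function_algebra.mult function_algebra.const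
        function_algebra_uminus function_algebra_power gens)+
  then show "C_inf_on euler_domain (\<lambda>_. 0)" "C_inf_on euler_domain vel_r"
    "C_inf_on euler_domain vel_y" "C_inf_on euler_domain pressure"
    by (auto intro: C_inf_on_function_algebra euler_generators_have_partials)
qed

lemma pd_eq_derivative:
  "((\<lambda>s. g (x + s *\<^sub>R b)) has_real_derivative D) (at 0) \<Longrightarrow> pd b g x = D"
  unfolding pd_def by (rule DERIV_imp_deriv)

lemma pd_const: "pd b (\<lambda>_. c) x = 0"
  by (simp add: pd_def)

lemma pd_e_t:
  "((\<lambda>\<tau>. g (\<tau>, \<theta>, r, y)) has_real_derivative D) (at t) \<Longrightarrow> pd e_t g (t, \<theta>, r, y) = D"
  by (rule pd_eq_derivative) (simp add: e_t_def DERIV_shift[of _ _ 0 t, simplified] add.commute)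

lemma pd_e_th:
  "((\<lambda>\<tau>. g (t, \<tau>, r, y)) has_real_derivative D) (at \<theta>) \<Longrightarrow> pd e_th g (t, \<theta>, r, y) = D"
  by (rule pd_eq_derivative) (simp add: e_th_def DERIV_shift[of _ _ 0 \<theta>, simplified] add.commute)

lemma pd_e_r:
  "((\<lambda>\<rho>. g (t, \<theta>, \<rho>, y)) has_real_derivative D) (at r) \<Longrightarrow> pd e_r g (t, \<theta>, r, y) = D"
  by (rule pd_eq_derivative) (simp add: e_r_def DERIV_shift[of _ _ 0 r, simplified] add.commute)

lemma pd_e_y:
  "((\<lambda>\<eta>. g (t, \<theta>, r, \<eta>)) has_real_derivative D) (at y) \<Longrightarrow> pd e_y g (t, \<theta>, r, y) = D"
  by (rule pd_eq_derivative) (simp add: e_y_def DERIV_shift[of _ _ 0 y, simplified] add.commute)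

lemma has_real_derivative_profile_chain [derivative_intros]:
  "(g has_real_derivative g') (at x) \<Longrightarrow> 0 < g x \<Longrightarrow>
    ((\<lambda>x. profile (g x)) has_real_derivative profile' (g x) * g') (at x)"
  by (rule DERIV_chain2[OF has_real_derivative_profile])

lemma has_real_derivative_profile'_chain [derivative_intros]:
  "(g has_real_derivative g') (at x) \<Longrightarrow> 0 < g x \<Longrightarrow>
    ((\<lambda>x. profile' (g x)) has_real_derivative profile'' (g x) * g') (at x)"
  by (rule DERIV_chain2[OF has_real_derivative_profile'])

context
  fixes t \<theta> r y :: real
  assumes t: "t < 1" and r: "0 < r"
begin

lemma pd_vel_r:
  "pd e_t vel_r (t, \<theta>, r, y) = profile' r * cos y / (1 - t)^2"
  "pd e_r vel_r (t, \<theta>, r, y) = profile'' r * cos y / (1 - t)"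
  "pd e_y vel_r (t, \<theta>, r, y) = - (profile' r * sin y / (1 - t))"
  using t r by (auto simp: vel_r_def power2_eq_square intro!: pd_e_t pd_e_r pd_e_y derivative_eq_intros)

lemma pd_vel_y:
  "pd e_t vel_y (t, \<theta>, r, y) = - (r^8 * profile r * sin y / (1 - t)^2)"
  "pd e_r vel_y (t, \<theta>, r, y) = - ((8 * r^7 * profile r + r^8 * profile' r) * sin y / (1 - t))"
  "pd e_y vel_y (t, \<theta>, r, y) = - (r^8 * profile r * cos y / (1 - t))"
  using t r by (auto simp: vel_y_def power2_eq_square intro!: pd_e_t pd_e_r pd_e_y derivative_eq_intros)

lemma pd_pressure:
  "pd e_th pressure (t, \<theta>, r, y) = 0"
  "pd e_r pressure (t, \<theta>, r, y) = - ((profile' r * cos y + profile' r * profile'' r * cos y ^ 2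
      + (4 * r^7 * profile r ^ 2 + r^8 * profile r * profile' r) * sin y ^ 2) / (1 - t)^2)"
  "pd e_y pressure (t, \<theta>, r, y) = (profile r * sin y + profile' r ^ 2 * cos y * sin y
      - r^8 * profile r ^ 2 * sin y * cos y) / (1 - t)^2"
  using t r by (auto simp: pressure_def intro!: pd_e_th pd_e_r pd_e_y derivative_eq_intros)
    (simp_all add: field_simps)

lemma reduced_euler_equations:
  "pd e_t vel_r (t, \<theta>, r, y) + (vel_r (t, \<theta>, r, y) * pd e_r vel_r (t, \<theta>, r, y)
     + vel_y (t, \<theta>, r, y) * pd e_y vel_r (t, \<theta>, r, y)) + 4 * vel_y (t, \<theta>, r, y)^2 / r^9
     = - pd e_r pressure (t, \<theta>, r, y)"
  "pd e_t vel_y (t, \<theta>, r, y) + (vel_r (t, \<theta>, r, y) * pd e_r vel_y (t, \<theta>, r, y)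
     + vel_y (t, \<theta>, r, y) * pd e_y vel_y (t, \<theta>, r, y)) - 8 * vel_r (t, \<theta>, r, y) * vel_y (t, \<theta>, r, y) / r
     = - (r^8 * pd e_y pressure (t, \<theta>, r, y))"
  "pd e_r vel_r (t, \<theta>, r, y) + pd e_y vel_y (t, \<theta>, r, y) - 3 * vel_r (t, \<theta>, r, y) / r = 0"
proof -
  \<comment> \<open>writing \<open>t = 1 - d\<close> keeps \<open>field_simps\<close> from multiplying out the powers of \<open>1 - t\<close>\<close>
  define d where "d = 1 - t"
  have d: "t = 1 - d" "d \<noteq> 0" using t by (auto simp: d_def)
  have "r \<noteq> 0" using r by simp
  then show "pd e_t vel_r (t, \<theta>, r, y) + (vel_r (t, \<theta>, r, y) * pd e_r vel_r (t, \<theta>, r, y)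
     + vel_y (t, \<theta>, r, y) * pd e_y vel_r (t, \<theta>, r, y)) + 4 * vel_y (t, \<theta>, r, y)^2 / r^9
     = - pd e_r pressure (t, \<theta>, r, y)"
    "pd e_t vel_y (t, \<theta>, r, y) + (vel_r (t, \<theta>, r, y) * pd e_r vel_y (t, \<theta>, r, y)
     + vel_y (t, \<theta>, r, y) * pd e_y vel_y (t, \<theta>, r, y)) - 8 * vel_r (t, \<theta>, r, y) * vel_y (t, \<theta>, r, y) / r
     = - (r^8 * pd e_y pressure (t, \<theta>, r, y))"
    "pd e_r vel_r (t, \<theta>, r, y) + pd e_y vel_y (t, \<theta>, r, y) - 3 * vel_r (t, \<theta>, r, y) / r = 0"
    unfolding pd_vel_r pd_vel_y pd_pressure using d(2)
    by (simp_all add: d(1) vel_r_def vel_y_def profile''_def field_simps power2_eq_square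
        flip: power_Suc) algebra+
qed

end

lemma euler_N_vel_pressure: "euler_N 1 (\<lambda>_. 0) vel_r vel_y pressure"
  unfolding euler_N_def Let_def dom_N_def
  using reduced_euler_equations by (clarsimp simp: pd_const pd_pressure(1))

lemma pd_r_vel_r_bounded_in_space:
  assumes t: "t < 1" shows "\<exists>B. \<forall>\<theta> r y. 0 < r \<longrightarrow> \<bar>pd e_r vel_r (t, \<theta>, r, y)\<bar> \<le> B"
proof -
  obtain C where C: "\<And>r. 0 < r \<Longrightarrow> \<bar>profile'' r\<bar> \<le> C"
    using profile''_bounded by blast
  have "\<bar>pd e_r vel_r (t, \<theta>, r, y)\<bar> \<le> C / (1 - t)" if r: "0 < r" for \<theta> r y
  proof -
    have "\<bar>profile'' r\<bar> * \<bar>cos y\<bar> \<le> C * 1"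
      using C[OF r] abs_cos_le_one[of y] by (intro mult_mono) auto
    then show ?thesis
      using pd_vel_r(2)[OF t r] t by (simp add: abs_mult divide_right_mono)
  qed
  then show ?thesis by blast
qed

lemma pd_r_vel_r_unbounded_in_time:
  assumes t0: "t0 < 1"
  shows "\<exists>t \<theta> r y. t0 < t \<and> 0 \<le> t \<and> t < 1 \<and> 0 < r \<and> M < \<bar>pd e_r vel_r (t, \<theta>, r, y)\<bar>"
proof -
  obtain r where r: "0 < r" "profile'' r \<noteq> 0"
    using profile''_not_identically_zero by blast
  define m where "m = max t0 0"
  have m: "t0 \<le> m" "0 \<le> m" "m < 1" using t0 by (auto simp: m_def)
  define d where "d = min ((1 - m) / 2) (\<bar>profile'' r\<bar> / (\<bar>M\<bar> + 1))"
  have "0 < d"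
    using m r by (simp add: d_def)
  moreover have "d \<le> (1 - m) / 2"
    unfolding d_def by (rule min.cobounded1)
  moreover have "d \<le> \<bar>profile'' r\<bar> / (\<bar>M\<bar> + 1)"
    unfolding d_def by (rule min.cobounded2)
  then have "M < \<bar>profile'' r\<bar> / d"
  proof -
    assume "d \<le> \<bar>profile'' r\<bar> / (\<bar>M\<bar> + 1)"
    then have "(\<bar>M\<bar> + 1) * d \<le> \<bar>profile'' r\<bar>"
      by (simp add: pos_le_divide_eq mult.commute)
    moreover have "M * d < (\<bar>M\<bar> + 1) * d"
      using \<open>0 < d\<close> by (intro mult_strict_right_mono) auto
    ultimately have "M * d < \<bar>profile'' r\<bar>"
      by linarith
    then show ?thesis
      using \<open>0 < d\<close> by (simp add: pos_less_divide_eq)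
  qed
  moreover have "\<bar>pd e_r vel_r (1 - d, 0, r, 0)\<bar> = \<bar>profile'' r\<bar> / d"
    using pd_vel_r(2)[of "1 - d" r 0 0] \<open>0 < d\<close> r by simp
  ultimately show ?thesis
    using m r by (intro exI[of _ "1 - d"] exI[of _ 0] exI[of _ r]) auto
qed

lemma open_euler_domain: "open euler_domain"
  unfolding euler_domain_def by (intro open_Collect_conj open_Collect_less continuous_intros)

theorem corollary3p2:
  shows "\<exists>T::real. 0 < T \<and> (\<exists>vth vr vy p.
     (\<exists>U. open U \<and> dom_N T \<subseteq> U \<and>
          C_inf_on U vth \<and> C_inf_on U vr \<and> C_inf_on U vy \<and> C_inf_on U p) \<and>
     periodic_N vth \<and> periodic_N vr \<and> periodic_N vy \<and> periodic_N p \<and>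
     euler_N T vth vr vy p \<and>
     (\<forall>t. 0 \<le> t \<and> t < T \<longrightarrow>
          (\<exists>B. \<forall>th r y. 0 < r \<longrightarrow> \<bar>pd e_r vr (t, th, r, y)\<bar> \<le> B)) \<and>
     (\<forall>M t0. t0 < T \<longrightarrow> (\<exists>t th r y. t0 < t \<and> 0 \<le> t \<and> t < T \<and> 0 < r \<and>
          M < \<bar>pd e_r vr (t, th, r, y)\<bar>)))"
proof -
  have "\<exists>U. open U \<and> dom_N 1 \<subseteq> U \<and> C_inf_on U (\<lambda>_. 0) \<and> C_inf_on U vel_r \<and>
      C_inf_on U vel_y \<and> C_inf_on U pressure"
    using open_euler_domain euler_fields_C_inf_on
    by (intro exI[of _ euler_domain]) (auto simp: dom_N_def euler_domain_def)
  moreover have "periodic_N (\<lambda>_. 0)" "periodic_N vel_r" "periodic_N vel_y" "periodic_N pressure"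
    by (simp_all add: periodic_N_def vel_r_def vel_y_def pressure_def)
  ultimately show ?thesis
    using euler_N_vel_pressure pd_r_vel_r_bounded_in_space pd_r_vel_r_unbounded_in_time
    by (intro exI[of _ 1] conjI exI[of _ "\<lambda>_. 0"] exI[of _ vel_r] exI[of _ vel_y] exI[of _ pressure])
       auto
qed

end
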